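(* The map $\Phi$ has the following properties: (P1) $\Phi$ is linear; (P2) $\Phi(X^\top)=\Phi(X)^\top$ for all $X$; (P3) for every skew-symmetric $X$, $\Phi(X)=P_qXP_q^\top$; (P4) if $X$ is positive semidefinite then so is $\Phi(X)$; (P5) if all entries of $X$ are nonnegative then all entries of $\Phi(X)$ are nonnegative; (P6) $\Phi(J)=J$; (P7) if moreover $P=P^\top$, then $\mathrm{Tr}\,\Phi(X)\le\mathrm{Tr}\,X$ for every positive semidefinite $X$.
   Context: $P=(p_{ij})$ is a row-stochastic $N\times N$ matrix, $q\in[0,1]$, $P_q=(1-q)I+qP$, $J=\mathbf 1\mathbf 1^\top/N$ with $\mathbf 1$ the all-ones vector. $\beta_1,\dots,\beta_N$ are independent random variables in $\{1,\dots,N\}$ with $\mathbb P(\beta_i=j)=p_{ij}$, $e_i$ the standard basis vectors, $K=(1-q)I+q\sum_i e_ie_{\beta_i}^\top$, and $\Phi(X)=\mathbb E[KXK^\top]$ for $X\in\mathbb R^{N\times N}$. *)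

theory Defs
  imports "HOL-Analysis.Analysis"
begin

text \<open>N x N real matrices are modelled as real^'n^'n with 'n a finite index type, N = CARD('n).\<close>

definition row_stochastic :: "real^'n^'n \<Rightarrow> bool" where
  "row_stochastic P \<longleftrightarrow> (\<forall>i j. P $ i $ j \<ge> 0) \<and> (\<forall>i. (\<Sum>j\<in>UNIV. P $ i $ j) = 1)"

definition Pq :: "real \<Rightarrow> real^'n^'n \<Rightarrow> real^'n^'n" where
  "Pq q P = (1 - q) *\<^sub>R mat 1 + q *\<^sub>R P"

definition Jmat :: "real^'n^'n" where
  "Jmat = (\<chi> i j. 1 / real CARD('n))"

text \<open>K for a realisation b of (beta_1,...,beta_N): K = (1-q) I + q sum_i e_i e_(b i)^T.\<close>
definition Kmat :: "real \<Rightarrow> ('n \<Rightarrow> 'n) \<Rightarrow> real^'n^'n" where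
  "Kmat q b = (1 - q) *\<^sub>R mat 1 + q *\<^sub>R (\<Sum>i\<in>UNIV. (\<chi> r c. (if r = i then 1 else 0) * (if c = b i then 1 else 0)))"

text \<open>Probability that (beta_1,...,beta_N) = (b 1,...,b N): the beta_i are independent with P(beta_i = j) = p_ij.\<close>
definition beta_prob :: "real^'n^'n \<Rightarrow> ('n \<Rightarrow> 'n) \<Rightarrow> real" where
  "beta_prob P b = (\<Prod>i\<in>UNIV. P $ i $ (b i))"

text \<open>Phi(X) = E[K X K^T], the expectation over the (finite) joint law of the beta_i.\<close>
definition Phi :: "real \<Rightarrow> real^'n^'n \<Rightarrow> real^'n^'n \<Rightarrow> real^'n^'n" where
  "Phi q P X = (\<Sum>b\<in>UNIV. beta_prob P b *\<^sub>R (Kmat q b ** X ** transpose (Kmat q b)))"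

definition psd :: "real^'n^'n \<Rightarrow> bool" where
  "psd X \<longleftrightarrow> transpose X = X \<and> (\<forall>v. 0 \<le> v \<bullet> (X *v v))"

definition mtrace :: "real^'n^'n \<Rightarrow> real" where
  "mtrace X = (\<Sum>i\<in>UNIV. X $ i $ i)"

end

theory Submission
  imports Defs
begin

text \<open>
  Write \<open>K = P\<^sub>q + q (B - P)\<close> with \<open>B = \<Sum>\<^sub>i e\<^sub>i e\<^sub>\<beta>\<^sub>i\<^sup>T\<close>. Since \<open>E B = P\<close> and the rows of \<open>B\<close>
  are independent, \<open>\<Phi>(X) = P\<^sub>q X P\<^sub>q\<^sup>T + q\<^sup>2 C(X)\<close> where the covariance term \<open>C(X)\<close> is diagonal
  with entries \<open>\<Sum>\<^sub>k p\<^sub>i\<^sub>k X\<^sub>k\<^sub>k - (P X P\<^sup>T)\<^sub>i\<^sub>i\<close>. Linearity, compatibility with transposition and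
  preservation of positivity and of semidefiniteness hold because \<open>\<Phi>\<close> is an average of congruences
  \<open>X \<mapsto> K X K\<^sup>T\<close>. The term \<open>C(X)\<close> vanishes on skew-symmetric matrices and on \<open>J\<close>, which gives
  (P3) and (P6). For symmetric \<open>P\<close> the decomposition yields
  \<open>tr \<Phi>(X) = ((1-q)\<^sup>2 + q\<^sup>2) tr X + 2q(1-q) tr (P X)\<close>, and \<open>tr (P X) \<le> tr X\<close> for doubly
  stochastic \<open>P\<close> and semidefinite \<open>X\<close> because \<open>2 X\<^sub>i\<^sub>k \<le> X\<^sub>i\<^sub>i + X\<^sub>k\<^sub>k\<close>.
\<close>

lemma matrix_add_rdistrib:
  fixes A B :: "'a::semiring_1^'n^'m"
  shows "(A + B) ** C = A ** C + B ** C"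
  by (simp add: matrix_matrix_mult_def vec_eq_iff distrib_right sum.distrib)

lemma transpose_add: "transpose (A + B) = transpose A + transpose B"
  by (simp add: transpose_def vec_eq_iff)

lemma trace_scaleR: "trace (c *\<^sub>R A) = c * trace (A :: real^'n^'n)"
  by (simp add: trace_def sum_distrib_left)

lemma matrix_mult_transpose_entry:
  fixes A B X :: "real^'n^'n"
  shows "(A ** X ** transpose B) $ i $ j = (\<Sum>k\<in>UNIV. \<Sum>l\<in>UNIV. X $ k $ l * (A $ i $ k * B $ j $ l))"
proof -
  have "(A ** X ** transpose B) $ i $ j = (\<Sum>l\<in>UNIV. (\<Sum>k\<in>UNIV. A $ i $ k * X $ k $ l) * B $ j $ l)"
    by (simp add: matrix_matrix_mult_def transpose_def)
  also have "\<dots> = (\<Sum>l\<in>UNIV. \<Sum>k\<in>UNIV. X $ k $ l * (A $ i $ k * B $ j $ l))"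
    unfolding sum_distrib_right by (intro sum.cong refl) (simp add: mult_ac)
  also have "\<dots> = (\<Sum>k\<in>UNIV. \<Sum>l\<in>UNIV. X $ k $ l * (A $ i $ k * B $ j $ l))"
    by (rule sum.swap)
  finally show ?thesis .
qed

lemma psd_0: "psd 0"
  by (simp add: psd_def transpose_def vec_eq_iff)

lemma psd_add: "psd X \<Longrightarrow> psd Y \<Longrightarrow> psd (X + Y)"
  by (auto simp: psd_def transpose_def vec_eq_iff matrix_vector_mult_add_rdistrib inner_add_right)

lemma psd_scaleR: "0 \<le> c \<Longrightarrow> psd X \<Longrightarrow> psd (c *\<^sub>R X)"
  by (auto simp: psd_def transpose_scalar simp flip: scaleR_matrix_vector_assoc)

lemma psd_sum:
  assumes "finite S" "\<And>b. b \<in> S \<Longrightarrow> psd (M b)"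
  shows "psd (\<Sum>b\<in>S. M b)"
  using assms by (induction S rule: finite_induct) (auto intro: psd_0 psd_add)

lemma psd_congruence:
  assumes "psd X"
  shows "psd (K ** X ** transpose K)"
proof -
  have "v \<bullet> ((K ** X ** transpose K) *v v) = (transpose K *v v) \<bullet> (X *v (transpose K *v v))" for v
    by (simp add: matrix_vector_mul_assoc[symmetric] dot_lmul_matrix[symmetric])
  with assms show ?thesis
    by (simp add: psd_def matrix_transpose_mul matrix_mul_assoc)
qed

lemma psd_offdiag_le:
  fixes X :: "real^'n^'n"
  assumes "psd X"
  shows "2 * X $ i $ k \<le> X $ i $ i + X $ k $ k"
proof -
  have sym: "X $ k $ i = X $ i $ k"
    using assms unfolding psd_def by (metis transpose_def vec_lambda_beta)
  let ?v = "axis i 1 - axis k 1 :: real^'n"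
  have "0 \<le> ?v \<bullet> (X *v ?v)" using assms by (simp add: psd_def)
  also have "?v \<bullet> (X *v ?v) = X $ i $ i - X $ i $ k - X $ k $ i + X $ k $ k"
    by (simp add: matrix_vector_mult_diff_distrib inner_diff_left inner_diff_right inner_axis'
        matrix_vector_mult_basis column_def)
  finally show ?thesis using sym by simp
qed

lemma skew_diag_eq_0:
  fixes Y :: "real^'n^'n"
  shows "transpose Y = - Y \<Longrightarrow> Y $ i $ i = 0"
  by (drule arg_cong[where f = "\<lambda>M. M $ i $ i"]) (simp add: transpose_def)

lemma skew_congruence:
  fixes A X :: "real^'n^'n"
  assumes "transpose X = - X"
  shows "transpose (A ** X ** transpose A) = - (A ** X ** transpose A)"
proof -
  have "B ** (- Y) = - (B ** Y)" "(- Y) ** B = - (Y ** B)" for B Y :: "real^'n^'n"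
    by (simp_all add: matrix_matrix_mult_def vec_eq_iff sum_negf)
  with assms show ?thesis
    by (simp add: matrix_transpose_mul matrix_mul_assoc)
qed

lemma matrix_mult_Jmat:
  fixes A :: "real^'n^'n"
  assumes "\<And>i. (\<Sum>k\<in>UNIV. A $ i $ k) = 1"
  shows "A ** Jmat = Jmat"
  by (simp add: vec_eq_iff matrix_matrix_mult_def Jmat_def assms flip: sum_divide_distrib)

lemma Jmat_mult_transpose:
  fixes A :: "real^'n^'n"
  assumes "\<And>i. (\<Sum>k\<in>UNIV. A $ i $ k) = 1"
  shows "Jmat ** transpose A = Jmat"
proof -
  have "transpose (Jmat :: real^'n^'n) = Jmat" by (simp add: Jmat_def transpose_def)
  then show ?thesis
    by (metis matrix_transpose_mul matrix_mult_Jmat[OF assms])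
qed

lemma sum_col_eq_sum_row:
  fixes P :: "real^'n^'n"
  assumes "transpose P = P"
  shows "(\<Sum>i\<in>UNIV. P $ i $ k) = (\<Sum>i\<in>UNIV. P $ k $ i)"
  using arg_cong[OF assms, of "\<lambda>M. \<Sum>i\<in>UNIV. M $ k $ i"] by (simp add: transpose_def)

lemma trace_doubly_stochastic_mult_le:
  fixes P X :: "real^'n^'n"
  assumes nonneg: "\<And>i k. 0 \<le> P $ i $ k"
    and rows: "\<And>i. (\<Sum>k\<in>UNIV. P $ i $ k) = 1" and cols: "\<And>k. (\<Sum>i\<in>UNIV. P $ i $ k) = 1"
    and "psd X"
  shows "trace (P ** X) \<le> trace X"
proof -
  have "trace (P ** X) = (\<Sum>i\<in>UNIV. \<Sum>k\<in>UNIV. P $ i $ k * X $ k $ i)"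
    by (simp add: trace_def matrix_matrix_mult_def)
  also have "\<dots> \<le> (\<Sum>i\<in>UNIV. \<Sum>k\<in>UNIV. P $ i $ k * X $ i $ i + P $ i $ k * X $ k $ k) / 2"
    unfolding sum_divide_distrib
  proof (intro sum_mono)
    fix i k
    have "2 * X $ k $ i \<le> X $ k $ k + X $ i $ i" by (rule psd_offdiag_le[OF \<open>psd X\<close>])
    then have "P $ i $ k * (2 * X $ k $ i) \<le> P $ i $ k * (X $ k $ k + X $ i $ i)"
      by (rule mult_left_mono[OF _ nonneg])
    then show "P $ i $ k * X $ k $ i \<le> (P $ i $ k * X $ i $ i + P $ i $ k * X $ k $ k) / 2"
      by (simp add: algebra_simps)
  qed
  also have "\<dots> = ((\<Sum>i\<in>UNIV. (\<Sum>k\<in>UNIV. P $ i $ k) * X $ i $ i)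
      + (\<Sum>k\<in>UNIV. (\<Sum>i\<in>UNIV. P $ i $ k) * X $ k $ k)) / 2"
    by (simp add: sum.distrib sum_distrib_right) (rule sum.swap)
  also have "\<dots> = trace X"
    by (simp add: rows cols trace_def)
  finally show ?thesis .
qed

lemma beta_prob_nonneg: "(\<And>i j. 0 \<le> P $ i $ j) \<Longrightarrow> 0 \<le> beta_prob P b"
  by (simp add: beta_prob_def prod_nonneg)

lemma sum_beta_prob_prod:
  "(\<Sum>b\<in>UNIV. beta_prob P b * (\<Prod>m\<in>UNIV. f m (b m))) = (\<Prod>m\<in>UNIV. \<Sum>x\<in>UNIV. P $ m $ x * f m x)"
  using prod_sum_PiE[of UNIV "\<lambda>_. UNIV" "\<lambda>m x. P $ m $ x * f m x"]
  by (simp add: PiE_UNIV_domain beta_prob_def prod.distrib)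

lemma sum_beta_prob_coord:
  assumes rows: "\<And>m. (\<Sum>x\<in>UNIV. P $ m $ x) = 1"
  shows "(\<Sum>b\<in>UNIV. beta_prob P b * f (b i)) = (\<Sum>x\<in>UNIV. P $ i $ x * f x)"
proof -
  have "f (b i) = (\<Prod>m\<in>UNIV. if m = i then f (b m) else 1)" for b
    by (simp add: prod.delta)
  moreover have "(\<Sum>x\<in>UNIV. P $ m $ x * (if m = i then f x else 1))
      = (if m = i then \<Sum>x\<in>UNIV. P $ i $ x * f x else 1)" for m
    by (simp add: rows)
  ultimately show ?thesis
    using sum_beta_prob_prod[of P "\<lambda>m x. if m = i then f x else 1"] by (simp add: prod.delta)
qed

lemma sum_beta_prob_coord_pair:
  assumes rows: "\<And>m. (\<Sum>x\<in>UNIV. P $ m $ x) = 1" and "i \<noteq> j"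
  shows "(\<Sum>b\<in>UNIV. beta_prob P b * (f (b i) * g (b j)))
    = (\<Sum>x\<in>UNIV. P $ i $ x * f x) * (\<Sum>x\<in>UNIV. P $ j $ x * g x)"
proof -
  define h where "h m x = (if m = i then f x else 1) * (if m = j then g x else 1)" for m x
  have "f (b i) * g (b j) = (\<Prod>m\<in>UNIV. h m (b m))" for b
    by (simp add: h_def prod.distrib prod.delta)
  moreover have "(\<Sum>x\<in>UNIV. P $ m $ x * h m x)
      = (if m = i then \<Sum>x\<in>UNIV. P $ i $ x * f x else 1) * (if m = j then \<Sum>x\<in>UNIV. P $ j $ x * g x else 1)" for m
    using \<open>i \<noteq> j\<close> by (simp add: h_def rows)
  ultimately show ?thesis
    by (simp add: sum_beta_prob_prod prod.distrib prod.delta)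
qed

lemma Kmat_entry: "Kmat q b $ r $ c = (1 - q) * (if r = c then 1 else 0) + q * (if b r = c then 1 else 0)"
  by (simp add: Kmat_def mat_def if_distrib[of "\<lambda>x. x * _"] cong: if_cong)

lemma Pq_entry: "Pq q P $ i $ k = (1 - q) * (if i = k then 1 else 0) + q * P $ i $ k"
  by (simp add: Pq_def mat_def)

lemma sum_Pq_row:
  fixes P :: "real^'n^'n"
  assumes "\<And>m. (\<Sum>x\<in>UNIV. P $ m $ x) = 1"
  shows "(\<Sum>k\<in>UNIV. Pq q P $ i $ k) = 1"
  by (simp add: Pq_entry sum.distrib assms flip: sum_distrib_left)

lemma sum_row_delta:
  fixes P :: "real^'n^'n"
  shows "(\<Sum>x\<in>UNIV. P $ i $ x * (if x = k then c else 0)) = c * P $ i $ k"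
  by (simp add: if_distrib[of "\<lambda>x. _ * x"] mult.commute cong: if_cong)

lemma Kmat_second_moment:
  fixes P :: "real^'n^'n"
  assumes rows: "\<And>m. (\<Sum>x\<in>UNIV. P $ m $ x) = 1"
  shows "(\<Sum>b\<in>UNIV. beta_prob P b * (Kmat q b $ i $ k * Kmat q b $ j $ l))
    = Pq q P $ i $ k * Pq q P $ j $ l
      + (if i = j then q^2 * ((if k = l then P $ i $ k else 0) - P $ i $ k * P $ i $ l) else 0)"
proof -
  define \<kappa> where "\<kappa> r c x = (1 - q) * (if r = c then 1 else 0) + (if x = c then q else 0)"
    for r c and x :: 'n
  have K: "Kmat q b $ r $ c = \<kappa> r c (b r)" for b r c
    by (simp add: Kmat_entry \<kappa>_def)
  have mean: "(\<Sum>x\<in>UNIV. P $ i $ x * \<kappa> i c x) = Pq q P $ i $ c" for i c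
    by (simp add: \<kappa>_def Pq_entry distrib_left sum.distrib sum_row_delta rows flip: sum_distrib_right)
  show ?thesis
  proof (cases "i = j")
    case False
    then show ?thesis
      by (simp add: K sum_beta_prob_coord_pair[OF rows False] mean)
  next
    case True
    have "\<kappa> i k x * \<kappa> i l x = (1 - q)^2 * (if i = k then 1 else 0) * (if i = l then 1 else 0)
        + (if x = k then (1 - q) * q * (if i = l then 1 else 0) + q^2 * (if k = l then 1 else 0) else 0)
        + (if x = l then (1 - q) * q * (if i = k then 1 else 0) else 0)" for x
      by (simp add: \<kappa>_def power2_eq_square algebra_simps)
    then have "(\<Sum>x\<in>UNIV. P $ i $ x * (\<kappa> i k x * \<kappa> i l x))
        = (1 - q)^2 * (if i = k then 1 else 0) * (if i = l then 1 else 0)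
          + ((1 - q) * q * (if i = l then 1 else 0) + q^2 * (if k = l then 1 else 0)) * P $ i $ k
          + (1 - q) * q * (if i = k then 1 else 0) * P $ i $ l"
      by (simp add: ring_distribs sum.distrib sum_row_delta flip: sum_distrib_right add: rows)
    with True show ?thesis
      using sum_beta_prob_coord[OF rows, of "\<lambda>x. \<kappa> i k x * \<kappa> i l x" i]
      by (simp add: K Pq_entry power2_eq_square algebra_simps)
  qed
qed

lemma Phi_entry:
  fixes P :: "real^'n^'n"
  shows "Phi q P X $ i $ j = (\<Sum>k\<in>UNIV. \<Sum>l\<in>UNIV. X $ k $ l *
      (\<Sum>b\<in>UNIV. beta_prob P b * (Kmat q b $ i $ k * Kmat q b $ j $ l)))"
proof -
  have "Phi q P X $ i $ j = (\<Sum>b\<in>UNIV. \<Sum>k\<in>UNIV. \<Sum>l\<in>UNIV.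
      X $ k $ l * (beta_prob P b * (Kmat q b $ i $ k * Kmat q b $ j $ l)))"
    by (simp add: Phi_def matrix_mult_transpose_entry sum_distrib_left mult.left_commute)
  also have "\<dots> = (\<Sum>k\<in>UNIV. \<Sum>b\<in>UNIV. \<Sum>l\<in>UNIV.
      X $ k $ l * (beta_prob P b * (Kmat q b $ i $ k * Kmat q b $ j $ l)))"
    by (rule sum.swap)
  also have "\<dots> = (\<Sum>k\<in>UNIV. \<Sum>l\<in>UNIV. \<Sum>b\<in>UNIV.
      X $ k $ l * (beta_prob P b * (Kmat q b $ i $ k * Kmat q b $ j $ l)))"
    by (intro sum.cong refl) (rule sum.swap)
  finally show ?thesis by (simp only: sum_distrib_left)
qed

lemma Phi_linear: "linear (Phi q P)"
proof (rule linearI)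
  show "Phi q P (X + Y) = Phi q P X + Phi q P Y" for X Y
    by (simp add: vec_eq_iff Phi_entry distrib_right sum.distrib)
  show "Phi q P (c *\<^sub>R X) = c *\<^sub>R Phi q P X" for c X
    by (simp add: vec_eq_iff Phi_entry sum_distrib_left mult.assoc)
qed

lemma Phi_transpose: "Phi q P (transpose X) = transpose (Phi q P X)"
proof -
  have "Phi q P (transpose X) $ i $ j = transpose (Phi q P X) $ i $ j" for i j
  proof -
    have "Phi q P (transpose X) $ i $ j = (\<Sum>l\<in>UNIV. \<Sum>k\<in>UNIV. X $ k $ l *
        (\<Sum>b\<in>UNIV. beta_prob P b * (Kmat q b $ j $ k * Kmat q b $ i $ l)))"
      by (simp add: Phi_entry transpose_def mult.commute)
    also have "\<dots> = transpose (Phi q P X) $ i $ j"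
      by (simp add: Phi_entry transpose_def) (rule sum.swap)
    finally show ?thesis .
  qed
  then show ?thesis by (simp add: vec_eq_iff)
qed

lemma Phi_nonneg:
  assumes "\<And>i j. 0 \<le> P $ i $ j" "0 \<le> q" "q \<le> 1" "\<And>k l. 0 \<le> X $ k $ l"
  shows "0 \<le> Phi q P X $ i $ j"
  unfolding Phi_entry
  by (intro sum_nonneg mult_nonneg_nonneg) (use assms in \<open>auto simp: Kmat_entry beta_prob_nonneg\<close>)

lemma Phi_psd:
  assumes "\<And>i j. 0 \<le> P $ i $ j" "psd X"
  shows "psd (Phi q P X)"
  unfolding Phi_def using assms by (auto intro!: psd_sum psd_scaleR psd_congruence beta_prob_nonneg)

text \<open>\<open>selection_cov P X = E[(B - P) X (B - P)\<^sup>T]\<close>, with \<open>B\<close> as in the header; it is diagonal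
  because distinct rows of \<open>B - P\<close> are independent and centred.\<close>
definition selection_cov :: "real^'n^'n \<Rightarrow> real^'n^'n \<Rightarrow> real^'n^'n" where
  "selection_cov P X = (\<chi> i j. if i = j
     then (\<Sum>k\<in>UNIV. P $ i $ k * X $ k $ k) - (P ** X ** transpose P) $ i $ i else 0)"

lemma Phi_eq:
  fixes P :: "real^'n^'n"
  assumes rows: "\<And>m. (\<Sum>x\<in>UNIV. P $ m $ x) = 1"
  shows "Phi q P X = Pq q P ** X ** transpose (Pq q P) + q^2 *\<^sub>R selection_cov P X"
proof -
  have "(\<Sum>k\<in>UNIV. \<Sum>l\<in>UNIV. X $ k $ l * (c * ((if k = l then P $ i $ k else 0) - P $ i $ k * P $ i $ l)))
      = c * ((\<Sum>k\<in>UNIV. P $ i $ k * X $ k $ k) - (P ** X ** transpose P) $ i $ i)" for c i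
    by (simp add: matrix_mult_transpose_entry right_diff_distrib sum_subtractf sum_distrib_left
        mult.commute mult.left_commute if_distrib[of "\<lambda>x. _ * x"] cong: if_cong)
  then show ?thesis
    by (simp add: vec_eq_iff Phi_entry Kmat_second_moment[OF rows] selection_cov_def
        distrib_left sum.distrib matrix_mult_transpose_entry flip: sum_distrib_left)
qed

lemma selection_cov_skew:
  fixes P X :: "real^'n^'n"
  assumes "transpose X = - X"
  shows "selection_cov P X = 0"
  using skew_diag_eq_0[OF assms] skew_diag_eq_0[OF skew_congruence[OF assms]]
  by (simp add: selection_cov_def vec_eq_iff)

lemma Phi_skew:
  fixes P :: "real^'n^'n"
  assumes "\<And>m. (\<Sum>x\<in>UNIV. P $ m $ x) = 1" "transpose X = - X"
  shows "Phi q P X = Pq q P ** X ** transpose (Pq q P)"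
  by (simp add: Phi_eq assms selection_cov_skew)

lemma selection_cov_Jmat:
  fixes P :: "real^'n^'n"
  assumes rows: "\<And>m. (\<Sum>x\<in>UNIV. P $ m $ x) = 1"
  shows "selection_cov P Jmat = 0"
  by (simp add: selection_cov_def vec_eq_iff matrix_mult_Jmat[OF rows] Jmat_mult_transpose[OF rows])
     (simp add: Jmat_def rows flip: sum_divide_distrib)

lemma Phi_Jmat:
  fixes P :: "real^'n^'n"
  assumes rows: "\<And>m. (\<Sum>x\<in>UNIV. P $ m $ x) = 1"
  shows "Phi q P Jmat = Jmat"
  by (simp add: Phi_eq rows selection_cov_Jmat flip: matrix_mul_assoc)
     (simp add: matrix_mult_Jmat Jmat_mult_transpose sum_Pq_row rows)

lemma Pq_congruence:
  fixes P X :: "real^'n^'n"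
  shows "Pq q P ** X ** transpose (Pq q P) = (1 - q)^2 *\<^sub>R X
    + ((1 - q) * q) *\<^sub>R (P ** X + X ** transpose P) + q^2 *\<^sub>R (P ** X ** transpose P)"
  by (simp add: Pq_def transpose_add transpose_scalar matrix_add_ldistrib matrix_add_rdistrib
      matrix_scalar_ac scalar_matrix_assoc[symmetric] matrix_mul_assoc)
     (simp add: scaleR_add_right power2_eq_square mult.commute)

lemma trace_selection_cov:
  fixes P X :: "real^'n^'n"
  assumes cols: "\<And>k. (\<Sum>i\<in>UNIV. P $ i $ k) = 1"
  shows "trace (selection_cov P X) = trace X - trace (P ** X ** transpose P)"
proof -
  have "(\<Sum>i\<in>UNIV. \<Sum>k\<in>UNIV. P $ i $ k * X $ k $ k) = (\<Sum>k\<in>UNIV. (\<Sum>i\<in>UNIV. P $ i $ k) * X $ k $ k)"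
    by (subst sum.swap) (simp add: sum_distrib_right)
  then show ?thesis
    by (simp add: trace_def selection_cov_def sum_subtractf cols)
qed

lemma trace_Phi:
  fixes P X :: "real^'n^'n"
  assumes rows: "\<And>m. (\<Sum>x\<in>UNIV. P $ m $ x) = 1" and sym: "transpose P = P"
  shows "trace (Phi q P X) = ((1 - q)^2 + q^2) * trace X + 2 * (1 - q) * q * trace (P ** X)"
proof -
  have cols: "(\<Sum>i\<in>UNIV. P $ i $ k) = 1" for k
    using rows sym by (simp add: sum_col_eq_sum_row)
  have "trace (X ** P) = trace (P ** X)"
    by (rule trace_mul_sym)
  then show ?thesis
    by (simp add: Phi_eq rows Pq_congruence trace_add trace_scaleR trace_selection_cov[OF cols] sym)
       (simp add: algebra_simps power2_eq_square)
qed

lemma trace_Phi_le: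
  fixes P X :: "real^'n^'n"
  assumes P: "row_stochastic P" "transpose P = P" and q: "0 \<le> q" "q \<le> 1" and "psd X"
  shows "trace (Phi q P X) \<le> trace X"
proof -
  have rows: "\<And>m. (\<Sum>x\<in>UNIV. P $ m $ x) = 1" and nonneg: "\<And>i k. 0 \<le> P $ i $ k"
    using P(1) by (simp_all add: row_stochastic_def)
  then have "trace (P ** X) \<le> trace X"
    using trace_doubly_stochastic_mult_le[OF nonneg rows _ \<open>psd X\<close>] sum_col_eq_sum_row[OF P(2)] by simp
  then have "2 * (1 - q) * q * trace (P ** X) \<le> 2 * (1 - q) * q * trace X"
    using q by (simp add: mult_left_mono)
  then show ?thesis
    by (simp add: trace_Phi[OF rows P(2)] power2_eq_square algebra_simps)
qed

lemma mtrace_eq_trace: "mtrace X = trace X"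
  by (simp add: mtrace_def trace_def)

theorem proposition1:
  fixes P :: "real^'n^'n" and q :: real
  assumes "row_stochastic P" and "0 \<le> q" and "q \<le> 1"
  shows "linear (Phi q P)
    \<and> (\<forall>X. Phi q P (transpose X) = transpose (Phi q P X))
    \<and> (\<forall>X. transpose X = - X \<longrightarrow> Phi q P X = Pq q P ** X ** transpose (Pq q P))
    \<and> (\<forall>X. psd X \<longrightarrow> psd (Phi q P X))
    \<and> (\<forall>X. (\<forall>i j. 0 \<le> X $ i $ j) \<longrightarrow> (\<forall>i j. 0 \<le> Phi q P X $ i $ j))
    \<and> (Phi q P Jmat = Jmat)
    \<and> (transpose P = P \<longrightarrow> (\<forall>X. psd X \<longrightarrow> mtrace (Phi q P X) \<le> mtrace X))"
proof -
  have rows: "\<And>m. (\<Sum>x\<in>UNIV. P $ m $ x) = 1" and nonneg: "\<And>i j. 0 \<le> P $ i $ j"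
    using assms(1) by (simp_all add: row_stochastic_def)
  show ?thesis
    unfolding mtrace_eq_trace
    using Phi_linear Phi_transpose Phi_skew[OF rows] Phi_psd[OF nonneg] Phi_nonneg[OF nonneg assms(2,3)]
      Phi_Jmat[OF rows] trace_Phi_le[OF assms(1) _ assms(2,3)]
    by blast
qed

end
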